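(* Let $\mathcal{A}$ be a Desargues affine plane, let $O\neq I$ be points, and let $\delta$ be a dilatation of $\mathcal{A}$ having a fixed point (which may lie on the line $\ell^{OI}$ or off it). Equip $\ell^{OI}$ with the skew field structure with zero $O$ and unit $I$, and the line $\delta(\ell^{OI})$ with the skew field structure with zero $\delta(O)$ and unit $\delta(I)$. Then for all $A,B\in\ell^{OI}$ with $B\neq O$, \[ \delta(r(A:B))=r(\delta(A):\delta(B)), \] where the ratio on the left is computed in $\ell^{OI}$ and the ratio on the right in $\delta(\ell^{OI})$.
   Context: A Desargues affine plane is an incidence structure of points and lines in which any two distinct points lie on exactly one line, through a point not on a line $\ell$ there is exactly one line disjoint from $\ell$ (Playfair), there exist three non-collinear points, and Desargues' axiom holds: if $A,B,C,A',B',C'$ are points such that the pairwise distinct lines $AA',BB',CC'$ are either all parallel or all pass through one point, and $AB\parallel A'B'$, $BC\parallel B'C'$ (with $AB\neq A'B'$, $BC\neq B'C'$, $A\ne C$, $A'\ne C'$), then $AC\parallel A'C'$. Skew field on a line: for distinct points $O,I$ and points $A,B$ on the line $\ell^{OI}$, addition is defined by: choose a point $B_1\notin\ell^{OI}$; let $P_1$ be the intersection of the line through $B_1$ parallel to $\ell^{OI}$ with the line through $A$ parallel to $OB_1$; then $A+B$ is the intersection of $\ell^{OI}$ with the line through $P_1$ parallel to $BB_1$. Multiplication is defined by: choose $B_1\notin\ell^{OI}$; let $P_1$ be the intersection of the line through $A$ parallel to $IB_1$ with the line $OB_1$; then $A\cdot B$ is the intersection of $\ell^{OI}$ with the line through $P_1$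 parallel to $BB_1$. These operations do not depend on the choice of $B_1$ and make $(\ell^{OI},+,\cdot)$ a skew field with zero $O$ and unit $I$; the same construction applies to any line with any chosen pair of distinct points as zero and unit. $X^{-1}$ denotes the multiplicative inverse. Ratio of two points on a line with chosen zero $O$: $r(A:B)=B^{-1}A$ for $B\neq O$. A dilatation of $\mathcal{A}$ is a collineation $\delta$ such that $\delta(P)\delta(Q)\parallel PQ$ for all points $P\neq Q$. *)

theory Defs
  imports Main
begin

definition line_of :: "'a set set \<Rightarrow> 'a \<Rightarrow> 'a \<Rightarrow> 'a set" where
  "line_of L A B = (THE l. l \<in> L \<and> A \<in> l \<and> B \<in> l)"

definition parallel :: "'a set \<Rightarrow> 'a set \<Rightarrow> bool" where
  "parallel l m \<longleftrightarrow> l = m \<or> l \<inter> m = {}"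

definition collinear :: "'a set set \<Rightarrow> 'a \<Rightarrow> 'a \<Rightarrow> 'a \<Rightarrow> bool" where
  "collinear L A B C \<longleftrightarrow> (\<exists>l\<in>L. A \<in> l \<and> B \<in> l \<and> C \<in> l)"

definition par_through :: "'a set set \<Rightarrow> 'a \<Rightarrow> 'a set \<Rightarrow> 'a set" where
  "par_through L P l = (THE m. m \<in> L \<and> P \<in> m \<and> parallel m l)"

definition meet :: "'a set \<Rightarrow> 'a set \<Rightarrow> 'a" where
  "meet l m = (THE X. X \<in> l \<and> X \<in> m)"

definition affine_plane :: "'a set set \<Rightarrow> bool" where
  "affine_plane L \<longleftrightarrow>
     (\<forall>A B. A \<noteq> B \<longrightarrow> (\<exists>!l. l \<in> L \<and> A \<in> l \<and> B \<in> l)) \<and>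
     (\<forall>l\<in>L. \<forall>P. P \<notin> l \<longrightarrow> (\<exists>!m. m \<in> L \<and> P \<in> m \<and> m \<inter> l = {})) \<and>
     (\<exists>A B C. \<not> collinear L A B C)"

definition desargues_axiom :: "'a set set \<Rightarrow> bool" where
  "desargues_axiom L \<longleftrightarrow>
     (\<forall>A B C A' B' C'.
        A \<noteq> A' \<and> B \<noteq> B' \<and> C \<noteq> C' \<and> A \<noteq> B \<and> B \<noteq> C \<and> A \<noteq> C \<and>
        A' \<noteq> B' \<and> B' \<noteq> C' \<and> A' \<noteq> C' \<and>
        line_of L A A' \<noteq> line_of L B B' \<and> line_of L B B' \<noteq> line_of L C C' \<and>
        line_of L A A' \<noteq> line_of L C C' \<and>
        ((parallel (line_of L A A') (line_of L B B') \<and>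
          parallel (line_of L B B') (line_of L C C') \<and>
          parallel (line_of L A A') (line_of L C C')) \<or>
         (\<exists>P. P \<in> line_of L A A' \<and> P \<in> line_of L B B' \<and> P \<in> line_of L C C')) \<and>
        parallel (line_of L A B) (line_of L A' B') \<and>
        parallel (line_of L B C) (line_of L B' C') \<and>
        line_of L A B \<noteq> line_of L A' B' \<and> line_of L B C \<noteq> line_of L B' C'
      \<longrightarrow> parallel (line_of L A C) (line_of L A' C'))"

definition desargues_affine_plane :: "'a set set \<Rightarrow> bool" where
  "desargues_affine_plane L \<longleftrightarrow> affine_plane L \<and> desargues_axiom L"

text \<open>Skew field operations on the line OI (zero Oz, unit Iu), using an auxiliary
  point B1 off the line (the result does not depend on the choice).\<close>

definition aux_pt :: "'a set set \<Rightarrow> 'a \<Rightarrow> 'a \<Rightarrow> 'a" where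
  "aux_pt L Oz Iu = (SOME B1. B1 \<notin> line_of L Oz Iu)"

definition sf_add :: "'a set set \<Rightarrow> 'a \<Rightarrow> 'a \<Rightarrow> 'a \<Rightarrow> 'a \<Rightarrow> 'a" where
  "sf_add L Oz Iu A B =
     (let l = line_of L Oz Iu; B1 = aux_pt L Oz Iu;
          P1 = meet (par_through L B1 l) (par_through L A (line_of L Oz B1))
      in meet l (par_through L P1 (line_of L B B1)))"

definition sf_mult :: "'a set set \<Rightarrow> 'a \<Rightarrow> 'a \<Rightarrow> 'a \<Rightarrow> 'a \<Rightarrow> 'a" where
  "sf_mult L Oz Iu A B =
     (let l = line_of L Oz Iu; B1 = aux_pt L Oz Iu;
          P1 = meet (par_through L A (line_of L Iu B1)) (line_of L Oz B1)
      in meet l (par_through L P1 (line_of L B B1)))"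

definition sf_inv :: "'a set set \<Rightarrow> 'a \<Rightarrow> 'a \<Rightarrow> 'a \<Rightarrow> 'a" where
  "sf_inv L Oz Iu X = (THE Y. Y \<in> line_of L Oz Iu \<and> sf_mult L Oz Iu X Y = Iu \<and> sf_mult L Oz Iu Y X = Iu)"

definition ratio :: "'a set set \<Rightarrow> 'a \<Rightarrow> 'a \<Rightarrow> 'a \<Rightarrow> 'a \<Rightarrow> 'a" where
  "ratio L Oz Iu A B = sf_mult L Oz Iu (sf_inv L Oz Iu B) A"

definition collineation :: "'a set set \<Rightarrow> ('a \<Rightarrow> 'a) \<Rightarrow> bool" where
  "collineation L f \<longleftrightarrow> bij f \<and> (\<forall>l. l \<in> L \<longleftrightarrow> f ` l \<in> L)"

definition dilatation :: "'a set set \<Rightarrow> ('a \<Rightarrow> 'a) \<Rightarrow> bool" where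
  "dilatation L f \<longleftrightarrow> collineation L f \<and>
     (\<forall>P Q. P \<noteq> Q \<longrightarrow> parallel (line_of L (f P) (f Q)) (line_of L P Q))"

end

theory Submission
  imports Defs
begin

text \<open>A collineation carries every construction by joining points, intersecting lines and
  drawing parallels to the same construction on the image points. So \<open>\<delta>\<close> maps the product
  on the line \<open>O I\<close>, computed with an auxiliary point \<open>C\<close>, to the product on the image
  line computed with the auxiliary point \<open>\<delta> C\<close>. By Desargues' axiom the product does not
  depend on the auxiliary point: for two auxiliary points not collinear with \<open>O\<close> two
  applications of the central Desargues configuration show it, and the general case passes
  through a third point. Hence \<open>\<delta>\<close> is multiplicative between the two skew fields, and since
  inverses are unique it also commutes with inverses and so with ratios.\<close>

locale affine_geometry =
  fixes L :: "'a set set"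
  assumes affine_plane: "affine_plane L"
begin

lemma line_ex1: "A \<noteq> B \<Longrightarrow> \<exists>!l. l \<in> L \<and> A \<in> l \<and> B \<in> l"
  using conjunct1[OF affine_plane[unfolded affine_plane_def]] by blast

lemma line_of:
  assumes "A \<noteq> B"
  shows "line_of L A B \<in> L" "A \<in> line_of L A B" "B \<in> line_of L A B"
  using theI'[OF line_ex1[OF assms]] unfolding line_of_def by auto

lemma line_of_eqI: "A \<noteq> B \<Longrightarrow> l \<in> L \<Longrightarrow> A \<in> l \<Longrightarrow> B \<in> l \<Longrightarrow> line_of L A B = l"
  unfolding line_of_def by (rule the1_equality[OF line_ex1]) auto

lemma lines_eqI:
  "l \<in> L \<Longrightarrow> m \<in> L \<Longrightarrow> A \<noteq> B \<Longrightarrow> A \<in> l \<Longrightarrow> B \<in> l \<Longrightarrow> A \<in> m \<Longrightarrow> B \<in> m \<Longrightarrow> l = m"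
  using line_ex1 by blast

lemma common_point_unique:
  "\<lbrakk>l \<in> L; m \<in> L; l \<noteq> m; X \<in> l; X \<in> m; Y \<in> l; Y \<in> m\<rbrakk> \<Longrightarrow> X = Y"
  using lines_eqI by blast

lemma line_of_commute: "line_of L A B = line_of L B A"
  unfolding line_of_def by metis

lemma point_off_line: "l \<in> L \<Longrightarrow> \<exists>P. P \<notin> l"
  using conjunct2[OF conjunct2[OF affine_plane[unfolded affine_plane_def]]]
  unfolding collinear_def by blast

lemma parallel_refl: "parallel l l"
  unfolding parallel_def by auto

lemma parallel_sym: "parallel l m \<Longrightarrow> parallel m l"
  unfolding parallel_def by auto

lemma parallel_eqI: "parallel l m \<Longrightarrow> X \<in> l \<Longrightarrow> X \<in> m \<Longrightarrow> l = m"
  unfolding parallel_def by auto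

lemma not_parallelI: "l \<noteq> m \<Longrightarrow> X \<in> l \<Longrightarrow> X \<in> m \<Longrightarrow> \<not> parallel l m"
  unfolding parallel_def by auto

lemma parallel_line_ex1:
  assumes "l \<in> L"
  shows "\<exists>!m. m \<in> L \<and> P \<in> m \<and> parallel m l"
proof (cases "P \<in> l")
  case True
  then show ?thesis
    using assms unfolding parallel_def by blast
next
  case False
  then have "\<exists>!m. m \<in> L \<and> P \<in> m \<and> m \<inter> l = {}"
    using conjunct1[OF conjunct2[OF affine_plane[unfolded affine_plane_def]]] assms by blast
  moreover have "m \<inter> l = {} \<longleftrightarrow> parallel m l" if "P \<in> m" for m
    using False that unfolding parallel_def by blast
  ultimately show ?thesis by blast
qed

lemma par_through:
  assumes "l \<in> L"
  shows "par_through L P l \<in> L" "P \<in> par_through L P l" "parallel (par_through L P l) l"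
  using theI'[OF parallel_line_ex1[OF assms]] unfolding par_through_def by auto

lemma par_through_eqI:
  "l \<in> L \<Longrightarrow> m \<in> L \<Longrightarrow> P \<in> m \<Longrightarrow> parallel m l \<Longrightarrow> par_through L P l = m"
  unfolding par_through_def by (rule the1_equality[OF parallel_line_ex1]) auto

lemma par_through_self: "l \<in> L \<Longrightarrow> P \<in> l \<Longrightarrow> par_through L P l = l"
  by (rule par_through_eqI) (auto simp: parallel_def)

lemma parallel_trans:
  assumes "l \<in> L" "m \<in> L" "n \<in> L" "parallel l m" "parallel m n"
  shows "parallel l n"
proof (rule ccontr)
  assume "\<not> parallel l n"
  then obtain X where X: "X \<in> l" "X \<in> n" "l \<noteq> n"
    unfolding parallel_def by auto
  have "par_through L X m = l"
    using assms X by (intro par_through_eqI) auto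
  moreover have "par_through L X m = n"
    using assms X parallel_sym by (intro par_through_eqI) auto
  ultimately show False
    using X by simp
qed

lemma not_parallel_cong:
  "\<lbrakk>l \<in> L; m \<in> L; l' \<in> L; m' \<in> L; \<not> parallel l m; parallel l' l; parallel m' m\<rbrakk>
    \<Longrightarrow> \<not> parallel l' m'"
  by (metis parallel_sym parallel_trans)

lemma meet_eqI: "l \<in> L \<Longrightarrow> m \<in> L \<Longrightarrow> l \<noteq> m \<Longrightarrow> X \<in> l \<Longrightarrow> X \<in> m \<Longrightarrow> meet l m = X"
  unfolding meet_def by (rule the_equality) (auto dest: lines_eqI)

lemma meet_in:
  assumes "l \<in> L" "m \<in> L" "\<not> parallel l m"
  shows "meet l m \<in> l" "meet l m \<in> m"
proof -
  obtain X where "X \<in> l" "X \<in> m" "l \<noteq> m"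
    using assms(3) unfolding parallel_def by auto
  with assms meet_eqI show "meet l m \<in> l" "meet l m \<in> m" by auto
qed

lemma transversal:
  assumes "l \<in> L" "C \<notin> l" "X \<in> l"
  shows "line_of L X C \<in> L" "X \<in> line_of L X C" "C \<in> line_of L X C"
    "\<not> parallel (line_of L X C) l" "Y \<in> l \<Longrightarrow> Y \<in> line_of L X C \<Longrightarrow> Y = X"
    "line_of L X C \<noteq> l"
proof -
  have "X \<noteq> C" using assms by auto
  then show XC: "line_of L X C \<in> L" "X \<in> line_of L X C" "C \<in> line_of L X C"
    using line_of by auto
  with assms show "line_of L X C \<noteq> l"
    by auto
  with XC assms show "\<not> parallel (line_of L X C) l"
    by (intro not_parallelI) auto
  show "Y \<in> l \<Longrightarrow> Y \<in> line_of L X C \<Longrightarrow> Y = X"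
    using XC assms lines_eqI by metis
qed

lemma not_parallel_par_through_transversal:
  assumes "l \<in> L" "C \<notin> l" "B \<in> l"
  shows "\<not> parallel l (par_through L Q (line_of L B C))"
  using transversal[OF assms] par_through[of "line_of L B C" Q] assms(1)
  by (metis not_parallel_cong parallel_refl parallel_sym)

lemma collineation_inj: "collineation L f \<Longrightarrow> inj f"
  unfolding collineation_def bij_def by auto

lemma collineation_image_line: "collineation L f \<Longrightarrow> l \<in> L \<Longrightarrow> f ` l \<in> L"
  unfolding collineation_def by auto

lemma collineation_image_line_of:
  assumes "collineation L f" "P \<noteq> Q"
  shows "f ` line_of L P Q = line_of L (f P) (f Q)"
proof -
  have "f P \<noteq> f Q"
    using collineation_inj[OF assms(1)] assms(2) by (auto dest: injD)
  then show ?thesis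
    using line_of[OF assms(2)] collineation_image_line[OF assms(1)]
    by (intro line_of_eqI[symmetric]) auto
qed

lemma collineation_image_parallel:
  assumes "collineation L f" "parallel m l"
  shows "parallel (f ` m) (f ` l)"
  using assms(2) image_Int[OF collineation_inj[OF assms(1)], of m l]
  unfolding parallel_def by auto

lemma collineation_image_par_through:
  assumes "collineation L f" "l \<in> L"
  shows "f ` par_through L P l = par_through L (f P) (f ` l)"
  using par_through[OF assms(2), of P] assms collineation_image_line collineation_image_parallel
  by (intro par_through_eqI[symmetric]) auto

lemma collineation_meet:
  assumes "collineation L f" "l \<in> L" "m \<in> L" "\<not> parallel l m"
  shows "f (meet l m) = meet (f ` l) (f ` m)"
proof -
  obtain X where X: "X \<in> l" "X \<in> m" "l \<noteq> m"
    using assms(4) unfolding parallel_def by auto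
  then have "f ` l \<noteq> f ` m"
    using collineation_inj[OF assms(1)] by (simp add: inj_image_eq_iff)
  with X assms have "meet (f ` l) (f ` m) = f X"
    by (intro meet_eqI) (auto intro: collineation_image_line)
  with X assms show ?thesis by (simp add: meet_eqI)
qed

end

locale desarguesian_geometry = affine_geometry +
  assumes desargues: "desargues_axiom L"
begin

lemma desargues_central:
  assumes lines: "a \<in> L" "b \<in> L" "c \<in> L" "a \<noteq> b" "b \<noteq> c" "a \<noteq> c"
    and centre: "Z \<in> a" "Z \<in> b" "Z \<in> c"
    and on: "A \<in> a" "A' \<in> a" "B \<in> b" "B' \<in> b" "C \<in> c" "C' \<in> c"
    and off: "A \<noteq> Z" "A' \<noteq> Z" "B \<noteq> Z" "B' \<noteq> Z" "C \<noteq> Z" "C' \<noteq> Z"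
    and moved: "A \<noteq> A'" "B \<noteq> B'" "C \<noteq> C'"
    and par: "parallel (line_of L A B) (line_of L A' B')"
      "parallel (line_of L B C) (line_of L B' C')"
  shows "parallel (line_of L A C) (line_of L A' C')"
proof -
  have vertices_distinct: "X \<noteq> Y"
    if "k \<in> L" "k' \<in> L" "k \<noteq> k'" "Z \<in> k" "Z \<in> k'" "X \<in> k" "Y \<in> k'" "X \<noteq> Z" for X Y k k'
    using common_point_unique that by metis
  have sides_distinct: "line_of L X Y \<noteq> line_of L X' Y'"
    if "k \<in> L" "k' \<in> L" "k \<noteq> k'" "Z \<in> k" "Z \<in> k'" "X \<in> k" "X' \<in> k" "Y \<in> k'"
      "X \<noteq> X'" "Y \<noteq> Z" "X \<noteq> Y" "X' \<noteq> Y'" for X X' Y Y' k k'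
  proof
    assume side: "line_of L X Y = line_of L X' Y'"
    have "line_of L X Y = k"
      by (rule lines_eqI[of _ _ X X'])
        (use line_of[OF that(11)] line_of[OF that(12)] side that in auto)
    then show False
      using that line_of[OF that(11)] common_point_unique[of k k' Y Z] by auto
  qed
  have lines_eq: "line_of L A A' = a" "line_of L B B' = b" "line_of L C C' = c"
    using line_of_eqI[OF moved(1) lines(1) on(1,2)] line_of_eqI[OF moved(2) lines(2) on(3,4)]
      line_of_eqI[OF moved(3) lines(3) on(5,6)] by simp_all
  have vertices: "A \<noteq> B" "B \<noteq> C" "A \<noteq> C" "A' \<noteq> B'" "B' \<noteq> C'" "A' \<noteq> C'"
    using vertices_distinct[OF lines(1,2,4) centre(1,2)]
      vertices_distinct[OF lines(2,3,5) centre(2,3)]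
      vertices_distinct[OF lines(1,3,6) centre(1,3)] on off by auto
  have sides: "line_of L A B \<noteq> line_of L A' B'" "line_of L B C \<noteq> line_of L B' C'"
    using sides_distinct[OF lines(1,2,4) centre(1,2)] sides_distinct[OF lines(2,3,5) centre(2,3)]
      vertices on off moved by auto
  show ?thesis
    by (rule desargues[unfolded desargues_axiom_def, rule_format, of A A' B B' C C'],
        intro conjI disjI2 exI[of _ Z])
      (simp_all add: lines_eq lines centre par moved vertices sides)
qed

end

definition par_proj :: "'a set set \<Rightarrow> 'a \<Rightarrow> 'a \<Rightarrow> 'a \<Rightarrow> 'a \<Rightarrow> 'a" where
  "par_proj L Oz Iu C A = meet (par_through L A (line_of L Iu C)) (line_of L Oz C)"

definition sf_mult_with :: "'a set set \<Rightarrow> 'a \<Rightarrow> 'a \<Rightarrow> 'a \<Rightarrow> 'a \<Rightarrow> 'a \<Rightarrow> 'a" where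
  "sf_mult_with L Oz Iu C A B =
     meet (line_of L Oz Iu) (par_through L (par_proj L Oz Iu C A) (line_of L B C))"

definition sf_inv_with :: "'a set set \<Rightarrow> 'a \<Rightarrow> 'a \<Rightarrow> 'a \<Rightarrow> 'a \<Rightarrow> 'a" where
  "sf_inv_with L Oz Iu C B =
     meet (line_of L Oz Iu) (par_through L C (line_of L (par_proj L Oz Iu C B) Iu))"

lemma sf_mult_eq_sf_mult_with: "sf_mult L Oz Iu A B = sf_mult_with L Oz Iu (aux_pt L Oz Iu) A B"
  by (simp add: sf_mult_def sf_mult_with_def par_proj_def Let_def)

locale coordinate_line = affine_geometry L for L :: "'a set set" +
  fixes Oz Iu :: 'a
  assumes Oz_neq_Iu: "Oz \<noteq> Iu"
begin

abbreviation line_OI :: "'a set" where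
  "line_OI \<equiv> line_of L Oz Iu"

lemma line_OI: "line_OI \<in> L" "Oz \<in> line_OI" "Iu \<in> line_OI"
  using line_of[OF Oz_neq_Iu] by auto

lemma aux_pt_off_line_OI: "aux_pt L Oz Iu \<notin> line_OI"
  unfolding aux_pt_def using someI_ex[OF point_off_line[OF line_OI(1)]] .

lemmas transversal_OI = transversal[OF line_OI(1)]

lemma not_parallel_transversals_Oz_Iu:
  assumes "C \<notin> line_OI"
  shows "\<not> parallel (line_of L Iu C) (line_of L Oz C)"
proof -
  have "Iu \<notin> line_of L Oz C"
    using transversal_OI(5)[OF assms line_OI(2,3)] Oz_neq_Iu by auto
  then have "line_of L Oz C \<noteq> line_of L Iu C"
    using transversal_OI(2)[OF assms line_OI(3)] by auto
  then show ?thesis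
    using transversal_OI[OF assms] line_OI by (intro not_parallelI[of _ _ C]) auto
qed

lemma not_parallel_par_proj:
  assumes "C \<notin> line_OI"
  shows "\<not> parallel (par_through L A (line_of L Iu C)) (line_of L Oz C)"
  using transversal_OI[OF assms] line_OI not_parallel_transversals_Oz_Iu[OF assms]
    par_through[of "line_of L Iu C" A]
  by (metis not_parallel_cong parallel_refl)

lemma par_proj:
  assumes "C \<notin> line_OI"
  shows "par_proj L Oz Iu C A \<in> par_through L A (line_of L Iu C)"
    "par_proj L Oz Iu C A \<in> line_of L Oz C"
  unfolding par_proj_def
  using meet_in[OF _ _ not_parallel_par_proj[OF assms]] transversal_OI[OF assms] line_OI
    par_through
  by auto

lemma par_proj_Oz: "C \<notin> line_OI \<Longrightarrow> par_proj L Oz Iu C Oz = Oz"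
  unfolding par_proj_def
  using not_parallel_par_proj transversal_OI line_OI par_through[of "line_of L Iu C" Oz]
  by (intro meet_eqI) (auto simp: parallel_def)

lemma par_proj_Iu:
  assumes "C \<notin> line_OI"
  shows "par_proj L Oz Iu C Iu = C"
proof -
  have "line_of L Iu C \<noteq> line_of L Oz C"
    using not_parallel_transversals_Oz_Iu[OF assms] parallel_refl by metis
  then show ?thesis
    unfolding par_proj_def par_through_self[OF transversal_OI(1,2)[OF assms line_OI(3)]]
    using transversal_OI(1,3)[OF assms line_OI(2)] transversal_OI(1,3)[OF assms line_OI(3)]
    by (intro meet_eqI) auto
qed

lemma par_proj_off_line_OI:
  assumes C: "C \<notin> line_OI" and A: "A \<in> line_OI" "A \<noteq> Oz"
  shows "par_proj L Oz Iu C A \<notin> line_OI" "par_proj L Oz Iu C A \<noteq> Oz"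
    "line_of L A (par_proj L Oz Iu C A) = par_through L A (line_of L Iu C)"
proof -
  note P = par_proj[OF C, of A]
  note m = par_through[OF transversal_OI(1)[OF C line_OI(3)], of A]
  have "par_through L A (line_of L Iu C) \<noteq> line_OI"
    using m transversal_OI(4)[OF C line_OI(3)] parallel_sym by metis
  then have "par_proj L Oz Iu C A \<noteq> Oz"
    using P m line_OI A lines_eqI by metis
  then show "par_proj L Oz Iu C A \<notin> line_OI" "par_proj L Oz Iu C A \<noteq> Oz"
    using P transversal_OI(5)[OF C line_OI(2)] by blast+
  then show "line_of L A (par_proj L Oz Iu C A) = par_through L A (line_of L Iu C)"
    using P m A by (intro line_of_eqI) auto
qed

lemma par_proj_neq_aux_point:
  assumes C: "C \<notin> line_OI" and A: "A \<in> line_OI" "A \<noteq> Iu"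
  shows "par_proj L Oz Iu C A \<noteq> C"
proof
  assume "par_proj L Oz Iu C A = C"
  then have "par_through L A (line_of L Iu C) = line_of L Iu C"
    using par_proj(1)[OF C] par_through(3)[OF transversal_OI(1)[OF C line_OI(3)], of A]
      transversal_OI(3)[OF C line_OI(3)] parallel_eqI by metis
  then have "A \<in> line_of L Iu C"
    using par_through[OF transversal_OI(1)[OF C line_OI(3)], of A] by metis
  with transversal_OI(5)[OF C line_OI(3) A(1)] A(2) show False by blast
qed

lemma meet_line_OI_par_through:
  assumes "C \<notin> line_OI" "B \<in> line_OI"
  shows "meet line_OI (par_through L Q (line_of L B C)) \<in> line_OI"
    "meet line_OI (par_through L Q (line_of L B C)) \<in> par_through L Q (line_of L B C)"
  using meet_in[OF line_OI(1) _ not_parallel_par_through_transversal[OF line_OI(1) assms]]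
    par_through[OF transversal_OI(1)[OF assms]] by auto

lemma meet_line_OI_par_through_eqI:
  assumes "C \<notin> line_OI" "B \<in> line_OI" "X \<in> line_OI" "X \<in> par_through L Q (line_of L B C)"
  shows "meet line_OI (par_through L Q (line_of L B C)) = X"
  using assms not_parallel_par_through_transversal[OF line_OI(1) assms(1,2)]
    line_OI(1) par_through(1)[OF transversal_OI(1)[OF assms(1,2)]]
  by (intro meet_eqI) (auto simp: parallel_def)

lemma sf_mult_with_in_line_OI:
  "C \<notin> line_OI \<Longrightarrow> B \<in> line_OI \<Longrightarrow> sf_mult_with L Oz Iu C A B \<in> line_OI"
  unfolding sf_mult_with_def by (rule meet_line_OI_par_through)

lemma sf_mult_with_parallel:
  assumes C: "C \<notin> line_OI" and B: "B \<in> line_OI" and P: "par_proj L Oz Iu C A \<notin> line_OI"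
  shows "parallel (line_of L (par_proj L Oz Iu C A) (sf_mult_with L Oz Iu C A B)) (line_of L B C)"
proof -
  note X = meet_line_OI_par_through[OF C B, of "par_proj L Oz Iu C A", folded sf_mult_with_def]
  have "line_of L (par_proj L Oz Iu C A) (sf_mult_with L Oz Iu C A B)
      = par_through L (par_proj L Oz Iu C A) (line_of L B C)"
    using P X par_through[OF transversal_OI(1)[OF C B]] by (intro line_of_eqI) auto
  then show ?thesis
    using par_through(3)[OF transversal_OI(1)[OF C B]] by simp
qed

lemma sf_mult_with_eqI:
  assumes D: "D \<notin> line_OI" and B: "B \<in> line_OI" and X: "X \<in> line_OI"
    and Q: "par_proj L Oz Iu D A \<noteq> X"
    and par: "parallel (line_of L (par_proj L Oz Iu D A) X) (line_of L B D)"
  shows "sf_mult_with L Oz Iu D A B = X"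
proof -
  have "par_through L (par_proj L Oz Iu D A) (line_of L B D) = line_of L (par_proj L Oz Iu D A) X"
    using line_of[OF Q] transversal_OI(1)[OF D B] par by (intro par_through_eqI) auto
  then have "X \<in> par_through L (par_proj L Oz Iu D A) (line_of L B D)"
    using line_of[OF Q] by simp
  then show ?thesis
    unfolding sf_mult_with_def by (rule meet_line_OI_par_through_eqI[OF D B X])
qed

lemma sf_mult_with_Oz_left:
  assumes "C \<notin> line_OI" "B \<in> line_OI"
  shows "sf_mult_with L Oz Iu C Oz B = Oz"
  unfolding sf_mult_with_def par_proj_Oz[OF assms(1)]
  by (intro meet_line_OI_par_through_eqI)
    (use assms line_OI par_through(2) transversal_OI(1) in auto)

lemma sf_mult_with_Oz_right:
  assumes "C \<notin> line_OI" "A \<in> line_OI"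
  shows "sf_mult_with L Oz Iu C A Oz = Oz"
proof -
  have "par_through L (par_proj L Oz Iu C A) (line_of L Oz C) = line_of L Oz C"
    using par_through_self transversal_OI(1)[OF assms(1) line_OI(2)] par_proj(2)[OF assms(1)]
    by simp
  then show ?thesis
    unfolding sf_mult_with_def
    by (intro meet_line_OI_par_through_eqI) (use assms transversal_OI(2) line_OI in auto)
qed

lemma sf_mult_with_Iu_left:
  assumes "C \<notin> line_OI" "B \<in> line_OI"
  shows "sf_mult_with L Oz Iu C Iu B = B"
proof -
  have "par_through L C (line_of L B C) = line_of L B C"
    using par_through_self transversal_OI[OF assms] by simp
  then show ?thesis
    unfolding sf_mult_with_def par_proj_Iu[OF assms(1)]
    by (intro meet_line_OI_par_through_eqI) (use assms transversal_OI(2) in auto)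
qed

lemma collineation_image_line_OI:
  "collineation L f \<Longrightarrow> f ` line_OI = line_of L (f Oz) (f Iu)"
  using collineation_image_line_of Oz_neq_Iu by blast

lemma collineation_par_proj:
  assumes f: "collineation L f" and C: "C \<notin> line_OI"
  shows "f (par_proj L Oz Iu C A) = par_proj L (f Oz) (f Iu) (f C) (f A)"
  unfolding par_proj_def
  using collineation_meet[OF f par_through(1) _ not_parallel_par_proj[OF C]]
    collineation_image_par_through[OF f] collineation_image_line_of[OF f]
    transversal_OI(1-3)[OF C line_OI(2)] transversal_OI(1-3)[OF C line_OI(3)]
  by (metis C line_OI(2,3))

lemma collineation_sf_mult_with:
  assumes f: "collineation L f" and C: "C \<notin> line_OI" and B: "B \<in> line_OI"
  shows "f (sf_mult_with L Oz Iu C A B) = sf_mult_with L (f Oz) (f Iu) (f C) (f A) (f B)"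
  unfolding sf_mult_with_def
  using collineation_meet[OF f line_OI(1) par_through(1)
      not_parallel_par_through_transversal[OF line_OI(1) C B]]
    collineation_image_line_OI[OF f] collineation_image_par_through[OF f]
    collineation_image_line_of[OF f] collineation_par_proj[OF f C] transversal_OI(1)[OF C B]
  by (metis B C)

lemma right_inverse_transversal:
  assumes C: "C \<notin> line_OI" and B: "B \<in> line_OI" "B \<noteq> Oz" and Y: "Y \<in> line_OI"
    and inv: "sf_mult_with L Oz Iu C B Y = Iu"
  shows "line_of L Y C = par_through L C (line_of L (par_proj L Oz Iu C B) Iu)"
proof -
  define P where "P = par_proj L Oz Iu C B"
  note m = par_through[OF transversal_OI(1)[OF C Y], of P]
  have "P \<noteq> Iu"
    using par_proj_off_line_OI[OF C B] line_OI P_def by auto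
  moreover have "Iu \<in> par_through L P (line_of L Y C)"
    using meet_line_OI_par_through(2)[OF C Y, of P] inv unfolding sf_mult_with_def P_def by simp
  ultimately have "line_of L P Iu = par_through L P (line_of L Y C)"
    using m by (intro line_of_eqI) auto
  then show ?thesis
    using m transversal_OI[OF C Y] line_of[of P Iu] \<open>P \<noteq> Iu\<close> unfolding P_def[symmetric]
    by (intro par_through_eqI[symmetric]) (auto intro: parallel_sym)
qed

lemma right_inverse_unique:
  assumes C: "C \<notin> line_OI" and B: "B \<in> line_OI" "B \<noteq> Oz" and Y: "Y \<in> line_OI" "Y' \<in> line_OI"
    and inv: "sf_mult_with L Oz Iu C B Y = Iu" "sf_mult_with L Oz Iu C B Y' = Iu"
  shows "Y = Y'"
proof -
  have "line_of L Y C = line_of L Y' C"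
    using right_inverse_transversal[OF C B Y(1) inv(1)]
      right_inverse_transversal[OF C B Y(2) inv(2)]
    by simp
  then show ?thesis
    using transversal_OI(2,5)[OF C Y(1)] transversal_OI(2)[OF C Y(2)] Y(2) by metis
qed

lemma sf_inv_with:
  assumes C: "C \<notin> line_OI" and B: "B \<in> line_OI" "B \<noteq> Oz"
  defines "P \<equiv> par_proj L Oz Iu C B"
  shows "sf_inv_with L Oz Iu C B \<in> line_OI" "sf_inv_with L Oz Iu C B \<noteq> Oz"
    "line_of L (sf_inv_with L Oz Iu C B) C = par_through L C (line_of L P Iu)"
proof -
  define m where "m = par_through L C (line_of L P Iu)"
  define Y where "Y = sf_inv_with L Oz Iu C B"
  have P: "P \<notin> line_OI" "P \<in> line_of L Oz C"
    using par_proj_off_line_OI[OF C B] par_proj[OF C] P_def by auto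
  then have "P \<noteq> Iu" using line_OI by auto
  note PIu = line_of[OF this]
  note mm = par_through[OF PIu(1), of C]
  have "\<not> parallel line_OI (line_of L P Iu)"
    using PIu P line_OI by (intro not_parallelI[of _ _ Iu]) auto
  then have "\<not> parallel line_OI m"
    using not_parallel_cong[OF line_OI(1) PIu(1) line_OI(1) mm(1) _ parallel_refl mm(3)] m_def
    by blast
  then have Y: "Y \<in> line_OI" "Y \<in> m"
    using meet_in[OF line_OI(1)] mm(1) unfolding m_def Y_def sf_inv_with_def P_def by auto
  then have YC: "line_of L Y C = m"
    using mm C m_def by (intro line_of_eqI) auto
  have "Y \<noteq> Oz"
  proof
    assume "Y = Oz"
    then have "parallel (line_of L P Iu) (line_of L Oz C)"
      using YC mm m_def by (simp add: parallel_sym)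
    then have "line_of L P Iu = line_of L Oz C"
      using PIu P parallel_eqI by metis
    then show False
      using PIu transversal_OI(5)[OF C line_OI(2,3)] Oz_neq_Iu by simp
  qed
  with Y YC show "sf_inv_with L Oz Iu C B \<in> line_OI" "sf_inv_with L Oz Iu C B \<noteq> Oz"
    "line_of L (sf_inv_with L Oz Iu C B) C = par_through L C (line_of L P Iu)"
    unfolding Y_def m_def by simp_all
qed

lemma sf_mult_with_sf_inv_with_right:
  assumes C: "C \<notin> line_OI" and B: "B \<in> line_OI" "B \<noteq> Oz"
  shows "sf_mult_with L Oz Iu C B (sf_inv_with L Oz Iu C B) = Iu"
proof -
  define P where "P = par_proj L Oz Iu C B"
  have "P \<notin> line_OI"
    using par_proj_off_line_OI[OF C B] P_def by auto
  then have "P \<noteq> Iu" using line_OI by auto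
  note PIu = line_of[OF this]
  have "par_through L P (par_through L C (line_of L P Iu)) = line_of L P Iu"
    using PIu par_through[OF PIu(1), of C] by (intro par_through_eqI) (auto intro: parallel_sym)
  then show ?thesis
    unfolding sf_mult_with_def sf_inv_with(3)[OF C B] P_def[symmetric]
    using PIu line_OI \<open>P \<notin> line_OI\<close> by (intro meet_eqI) auto
qed

text \<open>With the auxiliary point \<open>par_proj L Oz Iu C B\<close> in place of \<open>C\<close> the left inverse
  property is a direct computation; independence of the auxiliary point, which needs Desargues,
  transfers it to \<open>C\<close>.\<close>
lemma sf_mult_with_sf_inv_with_left_aux:
  assumes C: "C \<notin> line_OI" and B: "B \<in> line_OI" "B \<noteq> Oz"
  defines "P \<equiv> par_proj L Oz Iu C B"
  shows "sf_mult_with L Oz Iu P (sf_inv_with L Oz Iu C B) B = Iu"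
proof -
  define m where "m = par_through L C (line_of L P Iu)"
  define Y where "Y = sf_inv_with L Oz Iu C B"
  note Y = sf_inv_with[OF C B, folded P_def m_def Y_def]
  have P: "P \<notin> line_OI" "P \<in> line_of L Oz C" "P \<noteq> Oz"
    using par_proj_off_line_OI[OF C B] par_proj[OF C] P_def by auto
  then have "P \<noteq> Iu" using line_OI by auto
  note PIu = line_of[OF this]
  note mm = par_through[OF PIu(1), of C]
  have "line_of L Oz P = line_of L Oz C"
    using P transversal_OI(1,2)[OF C line_OI(2)] by (intro line_of_eqI) auto
  moreover have "par_through L Y (line_of L Iu P) = m"
    using mm m_def Y(1,3) transversal_OI(2)[OF C Y(1)] PIu
    by (subst line_of_commute) (intro par_through_eqI, auto intro: parallel_sym)
  moreover have "m \<noteq> line_of L Oz C"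
    using transversal_OI(5)[OF C line_OI(2) Y(1)] transversal_OI(2)[OF C Y(1)] Y(2,3) by auto
  ultimately have P_Y: "par_proj L Oz Iu P Y = C"
    unfolding par_proj_def using mm m_def transversal_OI(1,3)[OF C line_OI(2)]
    by (intro meet_eqI) auto
  have C_BP: "par_through L C (line_of L B P) = line_of L Iu C"
    unfolding par_proj_off_line_OI(3)[OF C B, folded P_def]
    using transversal_OI[OF C line_OI(3)] par_through[OF transversal_OI(1)[OF C line_OI(3)], of B]
    by (intro par_through_eqI) (auto intro: parallel_sym)
  show ?thesis
    unfolding Y_def[symmetric] sf_mult_with_def P_Y C_BP
    using transversal_OI[OF C line_OI(3)] line_OI by (intro meet_eqI) auto
qed

lemma sf_inv_eqI:
  assumes B: "B \<in> line_OI" "B \<noteq> Oz" and Y: "Y \<in> line_OI"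
    and inv: "sf_mult L Oz Iu B Y = Iu" "sf_mult L Oz Iu Y B = Iu"
  shows "sf_inv L Oz Iu B = Y"
  unfolding sf_inv_def
proof (rule the_equality)
  show "Y \<in> line_OI \<and> sf_mult L Oz Iu B Y = Iu \<and> sf_mult L Oz Iu Y B = Iu"
    using Y inv by simp
next
  fix Y' assume "Y' \<in> line_OI \<and> sf_mult L Oz Iu B Y' = Iu \<and> sf_mult L Oz Iu Y' B = Iu"
  then show "Y' = Y"
    using right_inverse_unique[OF aux_pt_off_line_OI B] Y inv
    unfolding sf_mult_eq_sf_mult_with by blast
qed

lemma transversals_distinct:
  assumes "C \<notin> line_OI" "B \<in> line_OI" "B \<noteq> Oz"
  shows "line_of L B C \<noteq> line_of L Oz C"
  using transversal_OI(2)[OF assms(1,2)] transversal_OI(5)[OF assms(1) line_OI(2) assms(2)] assms(3)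
  by auto

lemma sf_mult_with_neq_Oz:
  assumes C: "C \<notin> line_OI" and A: "A \<in> line_OI" "A \<noteq> Oz" and B: "B \<in> line_OI" "B \<noteq> Oz"
  shows "sf_mult_with L Oz Iu C A B \<noteq> Oz"
proof
  define P where "P = par_proj L Oz Iu C A"
  note m = par_through[OF transversal_OI(1)[OF C B(1)], of P]
  assume "sf_mult_with L Oz Iu C A B = Oz"
  then have "Oz \<in> par_through L P (line_of L B C)"
    using meet_line_OI_par_through(2)[OF C B(1)] unfolding sf_mult_with_def P_def by metis
  moreover have "P \<in> line_of L Oz C" "P \<noteq> Oz"
    using par_proj(2)[OF C] par_proj_off_line_OI(2)[OF C A] unfolding P_def by auto
  ultimately have "par_through L P (line_of L B C) = line_of L Oz C"
    using m(1,2) transversal_OI(1,2)[OF C line_OI(2)] lines_eqI[of _ _ Oz P] by blast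
  then have "line_of L B C = line_of L Oz C"
    using m(3) transversal_OI(3)[OF C B(1)] transversal_OI(3)[OF C line_OI(2)]
      parallel_eqI parallel_sym
    by metis
  with transversals_distinct[OF C B] show False ..
qed

lemma sf_mult_with_neq_right:
  assumes C: "C \<notin> line_OI" and A: "A \<in> line_OI" "A \<noteq> Iu" and B: "B \<in> line_OI" "B \<noteq> Oz"
  shows "sf_mult_with L Oz Iu C A B \<noteq> B"
proof
  define P where "P = par_proj L Oz Iu C A"
  note m = par_through[OF transversal_OI(1)[OF C B(1)], of P]
  assume "sf_mult_with L Oz Iu C A B = B"
  then have "B \<in> par_through L P (line_of L B C)"
    using meet_line_OI_par_through(2)[OF C B(1)] unfolding sf_mult_with_def P_def by metis
  then have "par_through L P (line_of L B C) = line_of L B C"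
    using m(3) transversal_OI(2)[OF C B(1)] parallel_eqI by metis
  then have "P \<in> line_of L B C"
    using m(2) by simp
  moreover have "P \<in> line_of L Oz C" "P \<noteq> C"
    using par_proj(2)[OF C] par_proj_neq_aux_point[OF C A] unfolding P_def by auto
  ultimately have "line_of L B C = line_of L Oz C"
    using transversal_OI(1,3)[OF C B(1)] transversal_OI(1,3)[OF C line_OI(2)] lines_eqI by metis
  with transversals_distinct[OF C B] show False ..
qed

lemma point_off_line_OI_and_transversal:
  assumes C: "C \<notin> line_OI"
  obtains E where "E \<notin> line_OI" "E \<notin> line_of L Oz C"
proof
  note OzC = transversal_OI[OF C line_OI(2)]
  note m = par_through[OF OzC(1), of Iu]
  note k = par_through[OF line_OI(1), of C]
  define E where "E = meet (par_through L Iu (line_of L Oz C)) (par_through L C line_OI)"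
  have "\<not> parallel (par_through L Iu (line_of L Oz C)) (par_through L C line_OI)"
    using not_parallel_cong[OF OzC(1) line_OI(1) m(1) k(1) OzC(4) m(3) k(3)] .
  then have E: "E \<in> par_through L Iu (line_of L Oz C)" "E \<in> par_through L C line_OI"
    using meet_in[OF m(1) k(1)] unfolding E_def by auto
  show "E \<notin> line_OI"
  proof
    assume "E \<in> line_OI"
    then have "par_through L C line_OI = line_OI"
      using E(2) k(3) parallel_eqI by metis
    with k(2) C show False by simp
  qed
  show "E \<notin> line_of L Oz C"
  proof
    assume "E \<in> line_of L Oz C"
    then have "par_through L Iu (line_of L Oz C) = line_of L Oz C"
      using E(1) m(3) parallel_eqI by metis
    with m(2) OzC(5)[OF line_OI(3)] Oz_neq_Iu show False by auto
  qed
qed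

end

locale desarguesian_line =
  coordinate_line L Oz Iu + desarguesian_geometry L for L :: "'a set set" and Oz Iu :: 'a
begin

lemma par_proj_parallel:
  assumes C: "C \<notin> line_OI" and D: "D \<notin> line_OI" "D \<notin> line_of L Oz C"
    and A: "A \<in> line_OI" "A \<noteq> Oz" "A \<noteq> Iu"
  shows "parallel (line_of L C D) (line_of L (par_proj L Oz Iu C A) (par_proj L Oz Iu D A))"
proof -
  have side: "parallel (line_of L Iu E) (line_of L A (par_proj L Oz Iu E A))"
    "parallel (line_of L E Iu) (line_of L (par_proj L Oz Iu E A) A)" if "E \<notin> line_OI" for E
    using par_through(3)[OF transversal_OI(1)[OF that line_OI(3)], of A]
      par_proj_off_line_OI(3)[OF that A(1,2)]
    by (simp_all add: line_of_commute[of _ Iu] line_of_commute[of A] parallel_sym)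
  show ?thesis
  proof (rule desargues_central[of "line_of L Oz C" line_OI "line_of L Oz D" Oz
        C "par_proj L Oz Iu C A" Iu A D "par_proj L Oz Iu D A"])
    show "line_of L Oz C \<noteq> line_of L Oz D"
      using D(2) transversal_OI(3)[OF D(1) line_OI(2)] by auto
  qed (use C D A side[OF C] side[OF D(1)] transversal_OI[OF C line_OI(2)]
      transversal_OI[OF D(1) line_OI(2)] transversal_OI(6)[OF D(1) line_OI(2), THEN not_sym]
      line_OI Oz_neq_Iu par_proj[OF C] par_proj[OF D(1)] par_proj_off_line_OI(1,2)[OF C A(1,2)]
      par_proj_off_line_OI(1,2)[OF D(1) A(1,2)] par_proj_neq_aux_point[OF C A(1,3)]
      par_proj_neq_aux_point[OF D(1) A(1,3)] in auto)
qed

lemma sf_mult_with_indep_noncollinear: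
  assumes C: "C \<notin> line_OI" and D: "D \<notin> line_OI" "D \<notin> line_of L Oz C"
    and A: "A \<in> line_OI" and B: "B \<in> line_OI"
  shows "sf_mult_with L Oz Iu C A B = sf_mult_with L Oz Iu D A B"
proof (cases "A = Oz \<or> A = Iu \<or> B = Oz")
  case True
  then show ?thesis
    using sf_mult_with_Oz_left sf_mult_with_Oz_right sf_mult_with_Iu_left C D(1) A B by auto
next
  case False
  then have A': "A \<noteq> Oz" "A \<noteq> Iu" and B': "B \<noteq> Oz" by auto
  define P where "P = par_proj L Oz Iu C A"
  define Q where "Q = par_proj L Oz Iu D A"
  define X where "X = sf_mult_with L Oz Iu C A B"
  have P: "P \<in> line_of L Oz C" "P \<noteq> Oz" "P \<notin> line_OI" "P \<noteq> C"
    using par_proj(2)[OF C] par_proj_off_line_OI(1,2)[OF C A A'(1)]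
      par_proj_neq_aux_point[OF C A A'(2)]
    unfolding P_def by auto
  have Q: "Q \<in> line_of L Oz D" "Q \<noteq> Oz" "Q \<noteq> D" "Q \<notin> line_OI"
    using par_proj(2)[OF D(1)] par_proj_off_line_OI(1,2)[OF D(1) A A'(1)]
      par_proj_neq_aux_point[OF D(1) A A'(2)]
    unfolding Q_def by auto
  have X: "X \<in> line_OI" "X \<noteq> B" "X \<noteq> Oz"
    using sf_mult_with_in_line_OI[OF C B] sf_mult_with_neq_right[OF C A A'(2) B B']
      sf_mult_with_neq_Oz[OF C A A'(1) B B']
    unfolding X_def by auto
  have DC_QP: "parallel (line_of L D C) (line_of L Q P)"
    using par_proj_parallel[OF C D A A'] unfolding P_def Q_def by (simp add: line_of_commute)
  have CB_PX: "parallel (line_of L C B) (line_of L P X)"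
    using sf_mult_with_parallel[OF C B P(3)[unfolded P_def]] unfolding P_def X_def
    by (simp add: line_of_commute parallel_sym)
  have "parallel (line_of L D B) (line_of L Q X)"
  proof (rule desargues_central[of "line_of L Oz D" "line_of L Oz C" line_OI Oz D Q C P B X])
    show "line_of L Oz D \<noteq> line_of L Oz C"
      using D(2) transversal_OI(3)[OF D(1) line_OI(2)] by auto
  qed (use C D B B' P Q X DC_QP CB_PX line_OI transversal_OI[OF C line_OI(2)]
      transversal_OI[OF D(1) line_OI(2)] in auto)
  then have "parallel (line_of L Q X) (line_of L B D)"
    by (simp add: line_of_commute[of D B] parallel_sym)
  moreover have "Q \<noteq> X"
    using Q(4) X(1) by auto
  ultimately show ?thesis
    using sf_mult_with_eqI[OF D(1) B X(1)] unfolding Q_def by (simp add: X_def)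
qed

lemma sf_mult_with_indep:
  assumes C: "C \<notin> line_OI" and D: "D \<notin> line_OI" and A: "A \<in> line_OI" and B: "B \<in> line_OI"
  shows "sf_mult_with L Oz Iu C A B = sf_mult_with L Oz Iu D A B"
proof (cases "D \<in> line_of L Oz C")
  case False
  with sf_mult_with_indep_noncollinear[OF C D] A B show ?thesis by blast
next
  case True
  obtain E where E: "E \<notin> line_OI" "E \<notin> line_of L Oz C"
    using point_off_line_OI_and_transversal[OF C] .
  have "D \<noteq> Oz" using D line_OI by auto
  have "D \<notin> line_of L Oz E"
  proof
    assume "D \<in> line_of L Oz E"
    then have "line_of L Oz E = line_of L Oz C"
      using True \<open>D \<noteq> Oz\<close> transversal_OI(1,2)[OF E(1) line_OI(2)]
        transversal_OI(1,2)[OF C line_OI(2)]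
        lines_eqI[of _ _ Oz D] by blast
    with E(2) transversal_OI(3)[OF E(1) line_OI(2)] show False by simp
  qed
  then show ?thesis
    using sf_mult_with_indep_noncollinear[OF C E A B] sf_mult_with_indep_noncollinear[OF E(1) D] A B
    by simp
qed

lemma sf_mult_with_sf_inv_with_left:
  assumes C: "C \<notin> line_OI" and B: "B \<in> line_OI" "B \<noteq> Oz"
  shows "sf_mult_with L Oz Iu C (sf_inv_with L Oz Iu C B) B = Iu"
  using sf_mult_with_sf_inv_with_left_aux[OF C B] sf_inv_with(1)[OF C B] B(1)
    sf_mult_with_indep[OF C par_proj_off_line_OI(1)[OF C B]] by simp

lemma sf_inv:
  assumes B: "B \<in> line_OI" "B \<noteq> Oz"
  shows "sf_inv L Oz Iu B \<in> line_OI" "sf_mult L Oz Iu B (sf_inv L Oz Iu B) = Iu"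
    "sf_mult L Oz Iu (sf_inv L Oz Iu B) B = Iu"
proof -
  note C = aux_pt_off_line_OI
  have "sf_inv L Oz Iu B = sf_inv_with L Oz Iu (aux_pt L Oz Iu) B"
    using sf_inv_eqI[OF B sf_inv_with(1)[OF C B]] sf_mult_with_sf_inv_with_right[OF C B]
      sf_mult_with_sf_inv_with_left[OF C B]
    unfolding sf_mult_eq_sf_mult_with by blast
  then show "sf_inv L Oz Iu B \<in> line_OI" "sf_mult L Oz Iu B (sf_inv L Oz Iu B) = Iu"
    "sf_mult L Oz Iu (sf_inv L Oz Iu B) B = Iu"
    using sf_inv_with(1)[OF C B] sf_mult_with_sf_inv_with_right[OF C B]
      sf_mult_with_sf_inv_with_left[OF C B]
    unfolding sf_mult_eq_sf_mult_with by simp_all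
qed

lemma collineation_image_desarguesian_line:
  assumes "collineation L f"
  shows "desarguesian_line L (f Oz) (f Iu)"
  using collineation_inj[OF assms] Oz_neq_Iu affine_plane desargues
  by unfold_locales (auto dest: injD)

lemma collineation_sf_mult:
  assumes f: "collineation L f" and X: "X \<in> line_OI" and Y: "Y \<in> line_OI"
  shows "f (sf_mult L Oz Iu X Y) = sf_mult L (f Oz) (f Iu) (f X) (f Y)"
proof -
  interpret image: desarguesian_line L "f Oz" "f Iu"
    using collineation_image_desarguesian_line[OF f] .
  have "f (aux_pt L Oz Iu) \<notin> image.line_OI"
    using aux_pt_off_line_OI collineation_image_line_OI[OF f] collineation_inj[OF f]
    by (auto dest: injD)
  moreover have "f X \<in> image.line_OI" "f Y \<in> image.line_OI"
    using X Y collineation_image_line_OI[OF f] by auto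
  ultimately show ?thesis
    unfolding sf_mult_eq_sf_mult_with collineation_sf_mult_with[OF f aux_pt_off_line_OI Y]
    using image.sf_mult_with_indep[OF _ image.aux_pt_off_line_OI] by blast
qed

lemma collineation_sf_inv:
  assumes f: "collineation L f" and B: "B \<in> line_OI" "B \<noteq> Oz"
  shows "f (sf_inv L Oz Iu B) = sf_inv L (f Oz) (f Iu) (f B)"
proof -
  interpret image: desarguesian_line L "f Oz" "f Iu"
    using collineation_image_desarguesian_line[OF f] .
  have "f B \<in> image.line_OI" "f B \<noteq> f Oz" "f (sf_inv L Oz Iu B) \<in> image.line_OI"
    using B sf_inv(1)[OF B] collineation_image_line_OI[OF f] collineation_inj[OF f]
    by (auto dest: injD)
  then show ?thesis
    using image.sf_inv_eqI collineation_sf_mult[OF f] sf_inv[OF B] B(1) by metis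
qed

lemma collineation_ratio:
  assumes f: "collineation L f" and A: "A \<in> line_OI" and B: "B \<in> line_OI" "B \<noteq> Oz"
  shows "f (ratio L Oz Iu A B) = ratio L (f Oz) (f Iu) (f A) (f B)"
  unfolding ratio_def
  using collineation_sf_mult[OF f sf_inv(1)[OF B] A] collineation_sf_inv[OF f B] by simp

end

theorem mainTheorem10:
  fixes L :: "'a set set" and \<delta> :: "'a \<Rightarrow> 'a" and Oz Iu A B :: 'a
  assumes "desargues_affine_plane L"
    and "Oz \<noteq> Iu"
    and "dilatation L \<delta>"
    and "\<exists>F. \<delta> F = F"
    and "A \<in> line_of L Oz Iu" and "B \<in> line_of L Oz Iu" and "B \<noteq> Oz"
  shows "\<delta> (ratio L Oz Iu A B) = ratio L (\<delta> Oz) (\<delta> Iu) (\<delta> A) (\<delta> B)"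
proof -
  interpret desarguesian_line L Oz Iu
    using assms(1,2) unfolding desargues_affine_plane_def by unfold_locales auto
  have "collineation L \<delta>"
    using assms(3) unfolding dilatation_def by simp
  then show ?thesis
    using collineation_ratio assms(5-7) by blast
qed

end
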